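(* Let $d\ge1$ be odd. Then for every $x\in[-1+\tfrac2d,1]$ there exists a unitary $U\in U(d)$ with $\operatorname{tr}[U\overline{U}]/d=x$, and $$\max\Big\{\frac{|\operatorname{tr}U|}{d}:\ U\in U(d),\ \frac{\operatorname{tr}[U\overline U]}{d}=x\Big\}=\Big[\tfrac12\big(1-\tfrac1d\big)\big(1-\tfrac2d+x\big)\Big]^{1/2}+\frac1d.$$
   Context: $\overline{U}$ denotes the entrywise complex conjugate of $U$. *)

theory Defs
  imports "HOL-Analysis.Analysis"
begin

definition mat_cnj :: "complex^'n^'m \<Rightarrow> complex^'n^'m"
  where "mat_cnj A = (\<chi> i j. cnj (A $ i $ j))"

definition mat_adj :: "complex^'n^'m \<Rightarrow> complex^'m^'n"
  where "mat_adj A = transpose (mat_cnj A)"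

definition unitary_mat :: "complex^'n^'n \<Rightarrow> bool"
  where "unitary_mat U \<longleftrightarrow> U ** mat_adj U = mat 1 \<and> mat_adj U ** U = mat 1"

end

theory Submission
  imports Defs
begin

text \<open>For odd \<open>d\<close> the matrix \<open>U - U\<^sup>T\<close> is skew-symmetric of odd size, hence singular,
  and a kernel vector yields a unit vector \<open>v\<close> with \<open>U (cnj v) = v\<close>. Then \<open>B = U - v v\<^sup>T\<close>
  satisfies \<open>(cnj v)\<^sup>T B = 0\<close> and \<open>B (cnj v) = 0\<close>, so for the orthogonal projection
  \<open>Q = I - v (cnj v)\<^sup>T\<close> we have \<open>2 tr B = tr (Q (B + B\<^sup>T))\<close>. Cauchy--Schwarz for the
  Frobenius inner product together with \<open>\<parallel>Q\<parallel>\<^sup>2 = d - 1\<close> and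
  \<open>\<parallel>B + B\<^sup>T\<parallel>\<^sup>2 = 2 (d - 2 + Re tr (U (cnj U)))\<close> bounds \<open>\<bar>tr B\<bar>\<close>, and
  \<open>\<bar>tr U\<bar> \<le> \<bar>v\<^sup>T v\<bar> + \<bar>tr B\<bar> \<le> 1 + \<bar>tr B\<bar>\<close>.
  The bound is attained by the real orthogonal matrices \<open>1 \<oplus> R \<oplus> \<dots> \<oplus> R\<close> with \<open>R\<close> a
  plane rotation, for which \<open>U (cnj U) = U\<^sup>2\<close>, by choosing the rotation angle.\<close>

definition vec_cnj :: "complex^'n \<Rightarrow> complex^'n"
  where "vec_cnj x = (\<chi> i. cnj (x $ i))"

lemma vec_cnj_nth [simp]: "vec_cnj x $ i = cnj (x $ i)"
  by (simp add: vec_cnj_def)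

lemma vec_cnj_vec_cnj [simp]: "vec_cnj (vec_cnj x) = x"
  by (simp add: vec_eq_iff)

lemma vec_cnj_add: "vec_cnj (x + y) = vec_cnj x + vec_cnj y"
  by (simp add: vec_eq_iff)

lemma vec_cnj_scaleR: "vec_cnj (r *\<^sub>R x) = r *\<^sub>R vec_cnj x"
  by (simp add: vec_eq_iff)

lemma norm_vec_cnj [simp]: "norm (vec_cnj x) = norm x"
  by (simp add: norm_vec_def)

lemma mat_cnj_nth [simp]: "mat_cnj A $ i $ j = cnj (A $ i $ j)"
  by (simp add: mat_cnj_def)

lemma mat_adj_nth [simp]: "mat_adj A $ i $ j = cnj (A $ j $ i)"
  by (simp add: mat_adj_def transpose_def)

lemma mat_cnj_mult_vec_cnj: "mat_cnj A *v vec_cnj x = vec_cnj (A *v x)"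
  by (simp add: vec_eq_iff matrix_vector_mult_def)

lemma mat_adj_mat_1 [simp]: "mat_adj (mat 1) = mat 1"
  by (simp add: vec_eq_iff mat_def)

lemma mat_cnj_transpose: "mat_cnj (transpose A) = mat_adj A"
  by (simp add: vec_eq_iff transpose_def)

lemma mat_adj_transpose: "mat_adj (transpose A) = mat_cnj A"
  by (simp add: vec_eq_iff transpose_def)

lemma norm_vec_power2: "(norm x)\<^sup>2 = (\<Sum>i\<in>UNIV. (norm (x $ i))\<^sup>2)"
  by (simp add: norm_vec_def L2_set_def sum_nonneg)

lemma sum_mult_cnj_eq_norm_power2: "(\<Sum>i\<in>UNIV. x $ i * cnj (x $ i)) = of_real ((norm x)\<^sup>2)"
  unfolding norm_vec_power2 of_real_sum complex_norm_square ..

lemma trace_transpose: "trace (transpose A) = trace A"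
  by (simp add: trace_def transpose_def)

lemma unitary_mat_adj_mult_vec:
  assumes "unitary_mat U" "U *v x = y"
  shows "mat_adj U *v y = x"
  using assms by (metis matrix_vector_mul_assoc matrix_vector_mul_lid unitary_mat_def)

lemma unitary_mat_iff_right_inverse:
  "unitary_mat U \<longleftrightarrow> U ** mat_adj U = mat 1"
  using matrix_left_right_inverse unfolding unitary_mat_def by blast

lemma inner_complex_eq_Re_mult_cnj: "inner z w = Re (z * cnj w)"
  by (simp add: inner_complex_def)

lemma inner_mat_eq_Re_trace:
  fixes A B :: "complex^'n^'m"
  shows "inner A B = Re (trace (A ** mat_adj B))"
  by (simp add: inner_vec_def trace_def matrix_matrix_mult_def inner_complex_eq_Re_mult_cnj Re_sum)

lemma norm_unitary_mat_power2:
  assumes "unitary_mat (U :: complex^'n^'n)"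
  shows "(norm U)\<^sup>2 = CARD('n)"
  using assms by (simp add: power2_norm_eq_inner inner_mat_eq_Re_trace unitary_mat_def trace_I)

lemma inner_transpose_right:
  fixes A B :: "complex^'n^'n"
  shows "inner A (transpose B) = Re (trace (A ** mat_cnj B))"
  by (simp add: inner_mat_eq_Re_trace mat_adj_transpose)

lemma inner_transpose_transpose: "inner (transpose A) (transpose B) = inner A B"
  by (simp add: inner_vec_def transpose_def) (rule sum.swap)

lemma norm_transpose: "norm (transpose A) = norm (A :: 'a::real_inner^'n^'m)"
  by (simp only: norm_eq_sqrt_inner inner_transpose_transpose)

definition vec_outer :: "'a::times^'m \<Rightarrow> 'a^'n \<Rightarrow> 'a^'n^'m"
  where "vec_outer x y = (\<chi> i j. x $ i * y $ j)"

lemma vec_outer_nth [simp]: "vec_outer x y $ i $ j = x $ i * y $ j"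
  by (simp add: vec_outer_def)

lemma vec_outer_0_left [simp]: "vec_outer (0 :: 'a::mult_zero^'m) y = 0"
  by (simp add: vec_eq_iff)

lemma vec_outer_0_right [simp]: "vec_outer x (0 :: 'a::mult_zero^'n) = 0"
  by (simp add: vec_eq_iff)

lemma transpose_vec_outer: "transpose (vec_outer x y) = vec_outer y (x :: 'a::comm_semiring_1^'m)"
  by (simp add: vec_eq_iff transpose_def mult.commute)

lemma vec_outer_mult_vec:
  "vec_outer x y *v z = (\<Sum>j\<in>UNIV. y $ j * z $ j) *s (x :: 'a::comm_semiring_1^'m)"
  by (simp add: vec_eq_iff matrix_vector_mult_def sum_distrib_left sum_distrib_right mult_ac)

lemma vec_mult_vec_outer:
  "z v* vec_outer x y = (\<Sum>i\<in>UNIV. z $ i * x $ i) *s (y :: 'a::comm_semiring_1^'n)"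
  by (simp add: vec_eq_iff vector_matrix_mult_def sum_distrib_left sum_distrib_right mult_ac)

lemma mat_mult_vec_outer:
  "A ** vec_outer x y = vec_outer (A *v x) (y :: 'a::comm_semiring_1^'n)"
  by (simp add: vec_eq_iff matrix_matrix_mult_def matrix_vector_mult_def sum_distrib_left
      sum_distrib_right mult_ac)

lemma vec_outer_mult_mat:
  "vec_outer x y ** A = vec_outer (x :: 'a::comm_semiring_1^'m) (y v* A)"
  by (simp add: vec_eq_iff matrix_matrix_mult_def vector_matrix_mult_def sum_distrib_left mult_ac)

lemma trace_vec_outer: "trace (vec_outer x y) = (\<Sum>i\<in>UNIV. x $ i * y $ i)"
  by (simp add: trace_def)

lemma norm_vec_outer:
  "norm (vec_outer x y) = norm x * norm (y :: 'a::real_normed_field^'n)"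
proof -
  have "(norm (vec_outer x y))\<^sup>2 = (norm x * norm y)\<^sup>2"
    by (simp add: norm_vec_power2 norm_mult power_mult_distrib sum_product)
  then show ?thesis
    by (simp add: power2_eq_iff_nonneg)
qed

lemma norm_trace_vec_outer_self_le:
  "norm (trace (vec_outer x x)) \<le> (norm (x :: 'a::real_normed_field^'n))\<^sup>2"
  unfolding trace_vec_outer norm_vec_power2
  by (rule order.trans[OF norm_sum]) (simp add: norm_mult power2_eq_square)

lemma inner_vec_outer:
  fixes A :: "complex^'n^'m"
  shows "inner A (vec_outer x y) = inner (A *v vec_cnj y) x"
  by (simp add: inner_vec_def inner_complex_eq_Re_mult_cnj matrix_vector_mult_def
      sum_distrib_left mult_ac del: times_complex.sel flip: Re_sum)

lemma cmod_trace_mult_le: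
  fixes A :: "complex^'n^'m" and B :: "complex^'m^'n"
  shows "cmod (trace (A ** B)) \<le> norm A * norm B"
proof -
  define absA where "absA = (\<chi> i j. cmod (A $ i $ j))"
  define absBt where "absBt = (\<chi> i j. cmod (B $ j $ i))"
  have "cmod (trace (A ** B)) \<le> (\<Sum>i\<in>UNIV. \<Sum>k\<in>UNIV. cmod (A $ i $ k) * cmod (B $ k $ i))"
    unfolding trace_def matrix_matrix_mult_def
    by (auto intro!: order.trans[OF norm_sum] sum_mono simp: norm_mult)
  also have "\<dots> = inner absA absBt"
    by (simp add: absA_def absBt_def inner_vec_def)
  also have "\<dots> \<le> norm absA * norm absBt"
    by (rule norm_cauchy_schwarz)
  also have "norm absA = norm A"
    by (simp add: absA_def norm_vec_def)
  also have "norm absBt = norm (transpose B)"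
    by (simp add: absBt_def norm_vec_def transpose_def)
  finally show ?thesis
    by (simp add: norm_transpose)
qed

section \<open>A conjugation-fixed unit vector\<close>

lemma det_uminus: "det (- A) = (-1) ^ CARD('n) * det (A :: 'a::comm_ring_1^'n^'n)"
proof -
  have "- A = (\<chi> i. (-1) *s A $ i)"
    by (simp add: vec_eq_iff)
  then show ?thesis
    using det_rows_mul[of "\<lambda>_. -1" "\<lambda>i. A $ i"] by simp
qed

lemma det_skew_symmetric_odd:
  fixes M :: "'a::field_char_0^'n^'n"
  assumes "odd CARD('n)" and "transpose M = - M"
  shows "det M = 0"
proof -
  have "det M = - det M"
    by (metis assms det_transpose det_uminus mult_minus1 power_minus_odd power_one)
  then show ?thesis
    by (simp add: eq_neg_iff_add_eq_0)
qed

lemma det_eq_0_imp_ex_kernel: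
  fixes M :: "'a::field^'n^'n"
  assumes "det M = 0"
  shows "\<exists>x. x \<noteq> 0 \<and> M *v x = 0"
  using assms invertible_det_nz invertible_left_inverse matrix_left_invertible_ker by metis

lemma complex_matrix_vector_mult_scaleR:
  fixes A :: "complex^'n^'m"
  shows "A *v (r *\<^sub>R x) = r *\<^sub>R (A *v x)"
  by (simp add: vec_eq_iff matrix_vector_mult_def scaleR_sum_right)

lemma unitary_odd_ex_conj_fixed:
  fixes U :: "complex^'n^'n"
  assumes U: "unitary_mat U" and odd: "odd CARD('n)"
  shows "\<exists>v. v \<noteq> 0 \<and> U *v vec_cnj v = v"
proof -
  have "transpose (U - transpose U) = - (U - transpose U)"
    by (simp add: vec_eq_iff transpose_def)
  then obtain z where "z \<noteq> 0" and "(U - transpose U) *v z = 0"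
    using det_eq_0_imp_ex_kernel det_skew_symmetric_odd[OF odd] by blast
  then have Uz: "U *v z = transpose U *v z"
    by (simp add: matrix_vector_mult_diff_rdistrib)
  have "mat_cnj U *v vec_cnj z = mat_adj U *v vec_cnj z"
    by (metis Uz mat_cnj_mult_vec_cnj mat_cnj_transpose)
  then have U_cnj_Uz: "U *v vec_cnj (U *v z) = vec_cnj z"
    using U by (simp add: unitary_mat_def matrix_vector_mul_assoc flip: mat_cnj_mult_vec_cnj)
  \<comment> \<open>The antilinear map \<open>x \<mapsto> U *v vec_cnj x\<close> swaps \<open>vec_cnj z\<close> and \<open>U *v z\<close>.\<close>
  define w_sum where "w_sum = vec_cnj z + U *v z"
  define w_diff where "w_diff = \<i> *s (vec_cnj z - U *v z)"
  have "U *v vec_cnj w_sum = w_sum"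
    by (simp add: w_sum_def vec_cnj_add U_cnj_Uz matrix_vector_right_distrib)
  moreover have "U *v vec_cnj w_diff = w_diff"
  proof -
    have "vec_cnj w_diff = (- \<i>) *s (z - vec_cnj (U *v z))"
      by (simp add: w_diff_def vec_eq_iff)
    then have "U *v vec_cnj w_diff = (- \<i>) *s (U *v z - vec_cnj z)"
      by (simp add: vector_scalar_commute matrix_vector_mult_diff_distrib U_cnj_Uz)
    then show ?thesis
      by (simp add: w_diff_def vec_eq_iff algebra_simps)
  qed
  moreover have "w_sum \<noteq> 0 \<or> w_diff \<noteq> 0"
  proof (rule ccontr)
    assume "\<not> (w_sum \<noteq> 0 \<or> w_diff \<noteq> 0)"
    then have "vec_cnj z + U *v z = 0" "vec_cnj z - U *v z = 0"
      by (auto simp: w_sum_def w_diff_def vec_eq_iff)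
    then have "vec_cnj z + vec_cnj z = 0"
      by simp
    with \<open>z \<noteq> 0\<close> show False
      by (simp add: vec_eq_iff complex_eq_iff)
  qed
  ultimately show ?thesis
    by blast
qed

lemma unitary_odd_ex_conj_fixed_unit:
  fixes U :: "complex^'n^'n"
  assumes "unitary_mat U" and "odd CARD('n)"
  shows "\<exists>v. norm v = 1 \<and> U *v vec_cnj v = v"
proof -
  obtain v where "v \<noteq> 0" and v: "U *v vec_cnj v = v"
    using unitary_odd_ex_conj_fixed assms by blast
  then have "norm (sgn v) = 1" and "U *v vec_cnj (sgn v) = sgn v"
    by (simp_all add: norm_sgn sgn_vec_def vec_cnj_scaleR complex_matrix_vector_mult_scaleR)
  then show ?thesis
    by blast
qed

section \<open>The upper bound\<close>

lemma matrix_diff_ldistrib: "A ** (B - C) = A ** B - A ** (C :: 'a::ring_1^'p^'n)"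
  by (simp add: vec_eq_iff matrix_matrix_mult_def sum_subtractf right_diff_distrib)

lemma matrix_diff_rdistrib: "(A - B) ** C = A ** C - B ** (C :: 'a::ring_1^'p^'n)"
  by (simp add: vec_eq_iff matrix_matrix_mult_def sum_subtractf left_diff_distrib)

lemma transpose_diff: "transpose (A - B) = transpose A - transpose B"
  by (simp add: vec_eq_iff transpose_def)

lemma cmod_trace_le_symmetrized:
  fixes B Q :: "complex^'n^'n"
  assumes "Q ** B = B" and "B ** transpose Q = B"
  shows "cmod (2 * trace B) \<le> norm Q * norm (B + transpose B)"
proof -
  have "trace (Q ** transpose B) = trace B"
    by (metis assms(2) matrix_transpose_mul trace_transpose transpose_transpose)
  then have "2 * trace B = trace (Q ** (B + transpose B))"
    by (simp add: matrix_add_ldistrib trace_add assms(1))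
  then show ?thesis
    using cmod_trace_mult_le by metis
qed

lemma norm_orthogonal_projection_power2:
  fixes v :: "complex^'n"
  assumes "norm v = 1"
  shows "(norm (mat 1 - vec_outer v (vec_cnj v)))\<^sup>2 = real CARD('n) - 1"
proof -
  let ?R = "vec_outer v (vec_cnj v)"
  have "unitary_mat (mat 1 :: complex^'n^'n)"
    by (simp add: unitary_mat_def mat_adj_mat_1)
  then have "(norm (mat 1 :: complex^'n^'n))\<^sup>2 = CARD('n)"
    by (rule norm_unitary_mat_power2)
  moreover have "inner (mat 1) ?R = 1" and "(norm ?R)\<^sup>2 = 1"
    using assms by (simp_all add: inner_vec_outer norm_vec_outer dot_square_norm)
  ultimately show ?thesis
    by (simp add: power2_norm_eq_inner inner_diff_left inner_diff_right inner_commute)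
qed

context
  fixes U :: "complex^'n^'n" and v :: "complex^'n"
  assumes unitary: "unitary_mat U" and unit: "norm v = 1" and fixed: "U *v vec_cnj v = v"
begin

lemma sum_mult_cnj_unit: "(\<Sum>i\<in>UNIV. v $ i * cnj (v $ i)) = 1"
  using unit by (simp add: sum_mult_cnj_eq_norm_power2)

lemma inner_vec_outer_conj_fixed: "inner U (vec_outer v v) = 1"
  using unit fixed by (simp add: inner_vec_outer dot_square_norm)

lemma vec_cnj_mult_deflation_eq_0: "vec_cnj v v* (U - vec_outer v v) = 0"
proof -
  have "vec_cnj v v* U = vec_cnj (mat_adj U *v v)"
    by (simp add: vec_eq_iff vector_matrix_mult_def matrix_vector_mult_def mult.commute)
  also have "\<dots> = v"
    using unitary_mat_adj_mult_vec[OF unitary fixed] by simp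
  finally show ?thesis
    using sum_mult_cnj_unit
    by (simp add: vector_matrix_mult_diff_rdistrib vec_mult_vec_outer mult.commute)
qed

lemma deflation_mult_vec_cnj_eq_0: "(U - vec_outer v v) *v vec_cnj v = 0"
  using fixed sum_mult_cnj_unit by (simp add: matrix_vector_mult_diff_rdistrib vec_outer_mult_vec)

lemma norm_deflation_symmetrized_power2:
  "(norm ((U - vec_outer v v) + transpose (U - vec_outer v v)))\<^sup>2
     = 2 * (real CARD('n) - 2 + Re (trace (U ** mat_cnj U)))"
proof -
  let ?P = "vec_outer v v" and ?B = "U - vec_outer v v"
  have P_sym: "transpose ?P = ?P"
    by (rule transpose_vec_outer)
  have "(norm ?P)\<^sup>2 = 1"
    using unit by (simp add: norm_vec_outer)
  have "inner ?P (transpose U) = 1"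
    using inner_transpose_transpose[of ?P U] P_sym inner_vec_outer_conj_fixed
    by (simp add: inner_commute)
  have "(norm ?B)\<^sup>2 = real CARD('n) - 1"
    using norm_unitary_mat_power2[OF unitary] inner_vec_outer_conj_fixed \<open>(norm ?P)\<^sup>2 = 1\<close>
    by (simp add: power2_norm_eq_inner inner_diff_left inner_diff_right inner_commute)
  moreover have "inner ?B (transpose ?B) = Re (trace (U ** mat_cnj U)) - 1"
    using inner_vec_outer_conj_fixed \<open>(norm ?P)\<^sup>2 = 1\<close> \<open>inner ?P (transpose U) = 1\<close>
      inner_transpose_right[of U U]
    by (simp add: transpose_diff P_sym inner_diff_left inner_diff_right power2_norm_eq_inner)
  ultimately show ?thesis
    by (simp add: power2_norm_eq_inner inner_add_left inner_add_right inner_commute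
        inner_transpose_transpose)
qed

lemma cmod_trace_le_of_conj_fixed:
  "cmod (trace U)
    \<le> 1 + sqrt ((real CARD('n) - 1) * (real CARD('n) - 2 + Re (trace (U ** mat_cnj U))) / 2)"
proof -
  define B where "B = U - vec_outer v v"
  define Q where "Q = mat 1 - vec_outer v (vec_cnj v)"
  define X where "X = real CARD('n) - 2 + Re (trace (U ** mat_cnj U))"
  have "Q ** B = B"
    using vec_cnj_mult_deflation_eq_0
    by (simp add: Q_def B_def matrix_diff_rdistrib vec_outer_mult_mat)
  moreover have "B ** transpose Q = B"
    using deflation_mult_vec_cnj_eq_0
    by (simp add: Q_def B_def transpose_diff transpose_vec_outer matrix_diff_ldistrib
        mat_mult_vec_outer)
  ultimately have "(cmod (2 * trace B))\<^sup>2 \<le> (norm Q)\<^sup>2 * (norm (B + transpose B))\<^sup>2"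
    by (metis cmod_trace_le_symmetrized norm_ge_zero power_mono power_mult_distrib)
  also have "\<dots> = 2 * ((real CARD('n) - 1) * X)"
    using norm_orthogonal_projection_power2[OF unit] norm_deflation_symmetrized_power2
    by (simp add: Q_def B_def X_def)
  finally have "(cmod (trace B))\<^sup>2 \<le> (real CARD('n) - 1) * X / 2"
    by (simp add: norm_mult power_mult_distrib mult.commute)
  then have "cmod (trace B) \<le> sqrt ((real CARD('n) - 1) * X / 2)"
    by (rule real_le_rsqrt)
  moreover have "cmod (trace (vec_outer v v)) \<le> 1"
    using norm_trace_vec_outer_self_le[of v] unit by simp
  moreover have "trace U = trace (vec_outer v v) + trace B"
    by (simp add: B_def trace_sub)
  ultimately show ?thesis
    unfolding X_def by (smt (verit) norm_triangle_ineq)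
qed

end

lemma cmod_trace_unitary_odd_le:
  fixes U :: "complex^'n^'n"
  assumes "unitary_mat U" and "odd CARD('n)"
  shows "cmod (trace U)
    \<le> 1 + sqrt ((real CARD('n) - 1) * (real CARD('n) - 2 + Re (trace (U ** mat_cnj U))) / 2)"
  using unitary_odd_ex_conj_fixed_unit[OF assms] cmod_trace_le_of_conj_fixed[OF assms(1)] by blast

section \<open>Block rotation matrices attain the bound\<close>

definition pair_partner :: "nat \<Rightarrow> nat"
  where "pair_partner a = (if odd a then a + 1 else a - 1)"

definition pair_sign :: "nat \<Rightarrow> real"
  where "pair_sign a = (if odd a then 1 else -1)"

text \<open>The orthogonal matrix \<open>1 \<oplus> R \<oplus> \<dots> \<oplus> R\<close> with rotation blocks
  \<open>R = [[c, s], [-s, c]]\<close> on the index pairs \<open>{1, 2}, {3, 4}, \<dots>\<close>\<close>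

definition rotation_blocks :: "real \<Rightarrow> real \<Rightarrow> nat \<Rightarrow> nat \<Rightarrow> real"
  where "rotation_blocks c s a b =
    (if a = 0 then of_bool (b = 0)
     else if b = a then c else if b = pair_partner a then pair_sign a * s else 0)"

lemma pair_partner_less: "odd d \<Longrightarrow> a < d \<Longrightarrow> a \<noteq> 0 \<Longrightarrow> pair_partner a < d"
  by (auto simp: pair_partner_def) (metis Suc_lessI even_Suc odd_pos)

lemma pair_partner_simps [simp]:
  assumes "0 < a"
  shows "pair_partner a \<noteq> 0" "pair_partner a \<noteq> a" "a \<noteq> pair_partner a"
    "pair_partner (pair_partner a) = a" "pair_sign (pair_partner a) = - pair_sign a"
  using assms by (auto simp: pair_partner_def pair_sign_def)

lemma pair_partner_eq_iff:
  "0 < a \<Longrightarrow> 0 < b \<Longrightarrow> pair_partner a = pair_partner b \<longleftrightarrow> a = b"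
  by (metis pair_partner_simps(4))

lemma pair_sign_mult_self [simp]: "pair_sign a * pair_sign a = 1"
  by (simp add: pair_sign_def)

lemma rotation_blocks_diag: "rotation_blocks c s a a = (if a = 0 then 1 else c)"
  by (simp add: rotation_blocks_def)

lemma sum_rotation_blocks_row:
  assumes "odd d" "a < d"
  shows "(\<Sum>m<d. rotation_blocks c s a m * f m)
    = (if a = 0 then f 0 else c * f a + pair_sign a * s * f (pair_partner a))"
proof (cases "a = 0")
  case True
  then have "rotation_blocks c s a m * f m = (if m = 0 then f 0 else 0)" for m
    by (simp add: rotation_blocks_def)
  then show ?thesis
    using assms True by simp
next
  case False
  then have "rotation_blocks c s a m * f m
      = (if m = a then c * f a else 0)
        + (if m = pair_partner a then pair_sign a * s * f m else 0)" for m
    by (auto simp: rotation_blocks_def)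
  then show ?thesis
    using assms False pair_partner_less by (simp add: sum.distrib)
qed

lemma rotation_blocks_orthogonal:
  assumes "odd d" "a < d" "b < d" "c\<^sup>2 + s\<^sup>2 = 1"
  shows "(\<Sum>m<d. rotation_blocks c s a m * rotation_blocks c s b m) = of_bool (a = b)"
proof (cases "a = 0")
  case True
  then show ?thesis
    using assms by (simp add: sum_rotation_blocks_row rotation_blocks_def)
next
  case False
  then have "(\<Sum>m<d. rotation_blocks c s a m * rotation_blocks c s b m)
      = c * rotation_blocks c s b a + pair_sign a * s * rotation_blocks c s b (pair_partner a)"
    using assms by (simp add: sum_rotation_blocks_row)
  also have "\<dots> = of_bool (a = b)"
  proof -
    consider "b = 0" | "b = a" | "b = pair_partner a" | "b \<noteq> 0" "b \<noteq> a" "b \<noteq> pair_partner a"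
      by blast
    then show ?thesis
    proof cases
      case 2
      then show ?thesis
        using False assms(4) by (simp add: rotation_blocks_def power2_eq_square algebra_simps)
    next
      case 4
      then have "a \<noteq> pair_partner b"
        using False by auto
      with 4 show ?thesis
        using False by (simp add: rotation_blocks_def pair_partner_eq_iff)
    qed (use False in \<open>simp_all add: rotation_blocks_def\<close>)
  qed
  finally show ?thesis .
qed

lemma rotation_blocks_square_diag:
  assumes "odd d" "a < d"
  shows "(\<Sum>m<d. rotation_blocks c s a m * rotation_blocks c s m a)
    = (if a = 0 then 1 else c\<^sup>2 - s\<^sup>2)"
  using assms sum_rotation_blocks_row[of d a c s "\<lambda>m. rotation_blocks c s m a"]
  by (cases "a = 0") (simp_all add: rotation_blocks_def power2_eq_square algebra_simps)

definition rotation_blocks_mat :: "('n \<Rightarrow> nat) \<Rightarrow> real \<Rightarrow> real \<Rightarrow> complex^'n^'n"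
  where "rotation_blocks_mat g c s = (\<chi> i j. of_real (rotation_blocks c s (g i) (g j)))"

context
  fixes g :: "'n::finite \<Rightarrow> nat"
  assumes g: "bij_betw g UNIV {..<CARD('n)}"
begin

lemma sum_reindex_enumeration: "(\<Sum>k\<in>UNIV. f (g k)) = (\<Sum>m<CARD('n). f m)"
  using sum.reindex_bij_betw[OF g] .

lemma enumeration_less: "g i < CARD('n)"
  using g by (auto simp: bij_betw_def)

lemma enumeration_eq_iff: "g i = g j \<longleftrightarrow> i = j"
  using g by (auto simp: bij_betw_def inj_on_def)

lemma sum_enumeration_diag:
  "(\<Sum>k\<in>UNIV. if g k = 0 then 1 else x) = 1 + (real CARD('n) - 1) * x"
  unfolding sum_reindex_enumeration[of "\<lambda>m. if m = 0 then 1 else x"]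
  by (cases "CARD('n)") (simp_all add: sum.lessThan_Suc_shift del: sum.lessThan_Suc)

lemma mat_cnj_rotation_blocks_mat: "mat_cnj (rotation_blocks_mat g c s) = rotation_blocks_mat g c s"
  by (simp add: rotation_blocks_mat_def vec_eq_iff)

lemma unitary_rotation_blocks_mat:
  assumes "odd CARD('n)" and "c\<^sup>2 + s\<^sup>2 = 1"
  shows "unitary_mat (rotation_blocks_mat g c s)"
proof -
  let ?R = "rotation_blocks c s"
  have "(\<Sum>k\<in>UNIV. ?R (g i) (g k) * ?R (g j) (g k)) = of_bool (i = j)" for i j
    using rotation_blocks_orthogonal[OF assms(1) enumeration_less enumeration_less assms(2)]
    by (simp add: sum_reindex_enumeration[of "\<lambda>m. ?R (g i) m * ?R (g j) m"] enumeration_eq_iff)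
  then show ?thesis
    by (simp add: unitary_mat_iff_right_inverse vec_eq_iff matrix_matrix_mult_def
        rotation_blocks_mat_def mat_def flip: of_real_mult of_real_sum)
qed

lemma trace_rotation_blocks_mat:
  "trace (rotation_blocks_mat g c s) = of_real (1 + (real CARD('n) - 1) * c)"
  using sum_enumeration_diag[of c]
  by (simp add: trace_def rotation_blocks_mat_def rotation_blocks_diag flip: of_real_sum)

lemma trace_rotation_blocks_mat_square:
  assumes "odd CARD('n)"
  shows "trace (rotation_blocks_mat g c s ** rotation_blocks_mat g c s)
    = of_real (1 + (real CARD('n) - 1) * (c\<^sup>2 - s\<^sup>2))"
proof -
  let ?R = "rotation_blocks c s"
  have "(\<Sum>k\<in>UNIV. ?R (g i) (g k) * ?R (g k) (g i)) = (if g i = 0 then 1 else c\<^sup>2 - s\<^sup>2)" for i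
    using rotation_blocks_square_diag[OF assms enumeration_less]
    by (simp add: sum_reindex_enumeration[of "\<lambda>m. ?R (g i) m * ?R m (g i)"])
  then show ?thesis
    using sum_enumeration_diag[of "c\<^sup>2 - s\<^sup>2"]
    by (simp add: trace_def matrix_matrix_mult_def rotation_blocks_mat_def
        flip: of_real_mult of_real_sum)
qed

end

lemma exists_rotation_for_trace:
  fixes d t :: real
  assumes "d \<ge> 1" and "2 - d \<le> t" and "t \<le> d"
  obtains c s where "c\<^sup>2 + s\<^sup>2 = 1" and "1 + (d - 1) * (c\<^sup>2 - s\<^sup>2) = t"
    and "(d - 1) * c = sqrt ((d - 1) * (d - 2 + t) / 2)"
proof
  \<comment> \<open>For \<open>d = 1\<close> the division by zero gives \<open>c = 0\<close>, which still works since then \<open>t = 1\<close>.\<close>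
  define c where "c = sqrt ((d - 2 + t) / (2 * (d - 1)))"
  define s where "s = sqrt (1 - c\<^sup>2)"
  have "c \<ge> 0" and c2: "c\<^sup>2 = (d - 2 + t) / (2 * (d - 1))"
    using assms by (simp_all add: c_def)
  have "c\<^sup>2 \<le> 1"
    using assms by (cases "d = 1") (simp_all add: c2 field_simps)
  then show "c\<^sup>2 + s\<^sup>2 = 1"
    by (simp add: s_def)
  have dc2: "(d - 1) * c\<^sup>2 = (d - 2 + t) / 2"
  proof (cases "d = 1")
    case True
    then show ?thesis
      using assms by (simp add: c2)
  next
    case False
    then show ?thesis
      by (simp add: c2 field_simps)
  qed
  have "1 + (d - 1) * (c\<^sup>2 - s\<^sup>2) = 1 + 2 * ((d - 1) * c\<^sup>2) - (d - 1)"
    using \<open>c\<^sup>2 \<le> 1\<close> by (simp add: s_def algebra_simps)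
  also have "\<dots> = t"
    unfolding dc2 by (simp add: field_simps)
  finally show "1 + (d - 1) * (c\<^sup>2 - s\<^sup>2) = t" .
  show "(d - 1) * c = sqrt ((d - 1) * (d - 2 + t) / 2)"
  proof (rule real_sqrt_unique[symmetric])
    have "((d - 1) * c)\<^sup>2 = (d - 1) * ((d - 1) * c\<^sup>2)"
      by (simp add: power2_eq_square algebra_simps)
    then show "((d - 1) * c)\<^sup>2 = (d - 1) * (d - 2 + t) / 2"
      unfolding dc2 by simp
    show "0 \<le> (d - 1) * c"
      using \<open>d \<ge> 1\<close> \<open>c \<ge> 0\<close> by simp
  qed
qed

lemma exists_unitary_attaining_trace_bound:
  assumes odd: "odd CARD('n::finite)"
    and t: "2 - real CARD('n) \<le> t" "t \<le> real CARD('n)"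
  shows "\<exists>U :: complex^'n^'n. unitary_mat U \<and> trace (U ** mat_cnj U) = of_real t
    \<and> cmod (trace U) = 1 + sqrt ((real CARD('n) - 1) * (real CARD('n) - 2 + t) / 2)"
proof -
  obtain g :: "'n \<Rightarrow> nat" where g: "bij_betw g UNIV {..<CARD('n)}"
    using ex_bij_betw_finite_nat[of "UNIV :: 'n set"] by (auto simp: atLeast0LessThan)
  have "real CARD('n) \<ge> 1"
    by (simp add: Suc_leI)
  then obtain c s where cs: "c\<^sup>2 + s\<^sup>2 = 1"
    and square: "1 + (real CARD('n) - 1) * (c\<^sup>2 - s\<^sup>2) = t"
    and cosine: "(real CARD('n) - 1) * c = sqrt ((real CARD('n) - 1) * (real CARD('n) - 2 + t) / 2)"
    using exists_rotation_for_trace t by blast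
  define U where "U = rotation_blocks_mat g c s"
  have "cmod (trace U) = \<bar>1 + (real CARD('n) - 1) * c\<bar>"
    unfolding U_def trace_rotation_blocks_mat[OF g] norm_of_real ..
  moreover have "0 \<le> (real CARD('n) - 1) * (real CARD('n) - 2 + t) / 2"
    using t \<open>real CARD('n) \<ge> 1\<close> by simp
  ultimately have "cmod (trace U) = 1 + sqrt ((real CARD('n) - 1) * (real CARD('n) - 2 + t) / 2)"
    unfolding cosine by simp
  moreover have "trace (U ** mat_cnj U) = of_real t"
    unfolding U_def mat_cnj_rotation_blocks_mat[OF g] trace_rotation_blocks_mat_square[OF g odd]
      square ..
  ultimately show ?thesis
    using unitary_rotation_blocks_mat[OF g odd cs] unfolding U_def by blast
qed

lemma normalized_trace_bound_eq:
  fixes d x :: real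
  assumes "d > 0"
  shows "sqrt ((1/2) * (1 - 1 / d) * (1 - 2 / d + x)) + 1 / d
    = (1 + sqrt ((d - 1) * (d - 2 + d * x) / 2)) / d"
proof -
  have "(1/2) * (1 - 1 / d) * (1 - 2 / d + x) = ((d - 1) * (d - 2 + d * x) / 2) / d\<^sup>2"
    using assms by (simp add: field_simps power2_eq_square)
  then have "sqrt ((1/2) * (1 - 1 / d) * (1 - 2 / d + x)) = sqrt ((d - 1) * (d - 2 + d * x) / 2) / d"
    using assms by (simp only: real_sqrt_divide real_sqrt_abs abs_of_pos)
  then show ?thesis
    by (simp add: add_divide_distrib)
qed

theorem proposition5:
  fixes x :: real
  defines "d \<equiv> CARD('n::finite)"
  assumes "odd d"
    and "-1 + 2 / real d \<le> x" and "x \<le> 1"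
  shows "(\<exists>U :: complex^'n^'n. unitary_mat U \<and>
            trace (U ** mat_cnj U) / of_nat d = complex_of_real x)
       \<and> (\<exists>U :: complex^'n^'n. unitary_mat U \<and>
            trace (U ** mat_cnj U) / of_nat d = complex_of_real x \<and>
            cmod (trace U) / real d
              = sqrt ((1/2) * (1 - 1 / real d) * (1 - 2 / real d + x)) + 1 / real d)
       \<and> (\<forall>U :: complex^'n^'n. unitary_mat U \<and>
            trace (U ** mat_cnj U) / of_nat d = complex_of_real x \<longrightarrow>
            cmod (trace U) / real d
              \<le> sqrt ((1/2) * (1 - 1 / real d) * (1 - 2 / real d + x)) + 1 / real d)"
proof -
  have "real d > 0"
    by (simp add: d_def)
  have normalized_iff: "trace A / of_nat d = complex_of_real x \<longleftrightarrow> trace A = of_real (real d * x)"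
    for A :: "complex^'n^'n"
    using \<open>real d > 0\<close> by (auto simp: field_simps)
  have "2 - real d \<le> real d * x" and "real d * x \<le> real d"
    using assms(3,4) \<open>real d > 0\<close> by (simp_all add: field_simps)
  then obtain U :: "complex^'n^'n"
    where "unitary_mat U" and "trace (U ** mat_cnj U) = of_real (real d * x)"
    and "cmod (trace U) = 1 + sqrt ((real d - 1) * (real d - 2 + real d * x) / 2)"
    using exists_unitary_attaining_trace_bound assms(2) unfolding d_def by blast
  moreover have
    "cmod (trace V) / real d \<le> (1 + sqrt ((real d - 1) * (real d - 2 + real d * x) / 2)) / real d"
    if "unitary_mat V" "trace (V ** mat_cnj V) = of_real (real d * x)" for V :: "complex^'n^'n"
    using cmod_trace_unitary_odd_le[OF that(1)] assms(2) that(2) \<open>real d > 0\<close>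
    unfolding d_def by (simp add: divide_right_mono)
  ultimately show ?thesis
    unfolding normalized_iff normalized_trace_bound_eq[OF \<open>real d > 0\<close>] by auto
qed

end
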